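(* Let $Y$ be a finite set, $\mathcal{S}$ a set of splits of $Y$, $\alpha:\mathcal{S}\to\mathbb{R}_{>0}$, and $\delta=\delta_{(\mathcal{S},\alpha)}$ the associated split system diversity. Then $P_\delta=P^{(2)}_\delta$, and hence $T_\delta=T^{(2)}_\delta$.
   Context: A split of $Y$ is an unordered pair $\{C,D\}$ of non-empty disjoint subsets with $C\cup D=Y$; it splits $A\subseteq Y$ if $A\cap C\ne\emptyset$ and $A\cap D\ne\emptyset$. $\delta_{(\mathcal{S},\alpha)}(A)=\sum_{S\in\mathcal{S},\ S\text{ splits }A}\alpha(S)$. $P_\delta=\{f\in\mathbb{R}^{\mathcal{P}(Y)}: f(\emptyset)=0,\ \sum_{A\in\mathcal{A}}f(A)\ge\delta(\bigcup\mathcal{A})\text{ for all }\mathcal{A}\subseteq\mathcal{P}(Y)\}$ and $T_\delta$ is its set of minimal elements (coordinatewise order); $P^{(2)}_\delta=\{f\in\mathbb{R}^{\mathcal{P}(Y)}:f(\emptyset)=0,\ f(A)+f(B)\ge\delta(A\cup B)\ \forall A,B\in\mathcal{P}(Y)\}$ and $T^{(2)}_\delta$ is its set of minimal elements. *)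

theory Defs
  imports "HOL-Analysis.Analysis" "HOL-Library.FuncSet"
begin

definition is_split :: "'a set \<Rightarrow> 'a set set \<Rightarrow> bool" where
  "is_split Y S \<longleftrightarrow> (\<exists>C D. S = {C, D} \<and> C \<noteq> {} \<and> D \<noteq> {} \<and> C \<inter> D = {} \<and> C \<union> D = Y)"

definition splits_set :: "'a set set \<Rightarrow> 'a set \<Rightarrow> bool" where
  "splits_set S A \<longleftrightarrow> (\<forall>C\<in>S. A \<inter> C \<noteq> {})"

definition split_diversity :: "'a set set set \<Rightarrow> ('a set set \<Rightarrow> real) \<Rightarrow> 'a set \<Rightarrow> real" where
  "split_diversity SS \<alpha> A = (\<Sum>S\<in>{S\<in>SS. splits_set S A}. \<alpha> S)"

text \<open>Functions in R^{P(Y)} are modelled as extensional functions on Pow Y.\<close>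
definition P_delta :: "'a set \<Rightarrow> ('a set \<Rightarrow> real) \<Rightarrow> ('a set \<Rightarrow> real) set" where
  "P_delta Y \<delta> = {f \<in> Pow Y \<rightarrow>\<^sub>E UNIV. f {} = 0 \<and>
      (\<forall>\<A>. \<A> \<subseteq> Pow Y \<longrightarrow> (\<Sum>A\<in>\<A>. f A) \<ge> \<delta> (\<Union>\<A>))}"

definition P2_delta :: "'a set \<Rightarrow> ('a set \<Rightarrow> real) \<Rightarrow> ('a set \<Rightarrow> real) set" where
  "P2_delta Y \<delta> = {f \<in> Pow Y \<rightarrow>\<^sub>E UNIV. f {} = 0 \<and>
      (\<forall>A\<in>Pow Y. \<forall>B\<in>Pow Y. f A + f B \<ge> \<delta> (A \<union> B))}"

definition minimal_elements :: "'a set \<Rightarrow> ('a set \<Rightarrow> real) set \<Rightarrow> ('a set \<Rightarrow> real) set" where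
  "minimal_elements Y P = {f \<in> P. \<not> (\<exists>g\<in>P. (\<forall>A\<in>Pow Y. g A \<le> f A) \<and> (\<exists>A\<in>Pow Y. g A < f A))}"

end

theory Submission
  imports Defs
begin

(* For a split-system diversity delta the only non-trivial inclusion is
   P2_delta \<subseteq> P_delta, i.e. that the pairwise inequalities f A + f B \<ge> delta (A \<union> B)
   imply delta (\<Union>\<A>) \<le> \<Sum>A\<in>\<A>. f A for every family \<A> of subsets of Y.
   The key combinatorial fact is a leave-one-out inequality: for a family \<A> of
   n \<ge> 3 non-empty sets,  (n - 1) * delta (\<Union>\<A>) \<le> \<Sum>A\<in>\<A>. delta (\<Union>(\<A> - {A})).
   It holds because a split that separates \<Union>\<A> but not \<Union>(\<A> - {A}) is "lost"
   for at most one A: two unsplit unions sharing a third non-empty member have an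
   unsplit union.  Given this inequality, the collective inequality follows by
   induction on the size of \<A>: summing the induction hypotheses for all \<A> - {A}
   counts every f B exactly n - 1 times. *)

lemma splits_set_pair: "splits_set {C, D} X \<longleftrightarrow> X \<inter> C \<noteq> {} \<and> X \<inter> D \<noteq> {}"
  unfolding splits_set_def by simp

lemma splits_set_mono: "A \<subseteq> B \<Longrightarrow> splits_set S A \<Longrightarrow> splits_set S B"
  unfolding splits_set_def by blast

lemma not_splits_empty: "is_split Y S \<Longrightarrow> \<not> splits_set S {}"
  unfolding is_split_def splits_set_def by auto

text \<open>If two sets are not separated by a split of Y and have a common point of Y,
  then their union is not separated either: both lie in the part containing that point.\<close>
lemma not_splits_Un:
  assumes "is_split Y S" "\<not> splits_set S U1" "\<not> splits_set S U2" "U1 \<inter> U2 \<inter> Y \<noteq> {}"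
  shows "\<not> splits_set S (U1 \<union> U2)"
proof -
  obtain C D where S: "S = {C, D}" "C \<inter> D = {}" "C \<union> D = Y"
    using assms(1) unfolding is_split_def by blast
  from assms(2,3,4) show ?thesis
    unfolding S(1) splits_set_pair using S(2,3) by blast
qed

lemma finite_split_system:
  assumes "finite Y" "\<forall>S\<in>SS. is_split Y S"
  shows "finite SS"
proof -
  have "SS \<subseteq> Pow (Pow Y)" using assms(2) by (auto simp: is_split_def)
  then show ?thesis using assms(1) by (meson finite_Pow_iff finite_subset)
qed

lemma split_diversity_nonneg:
  "\<forall>S\<in>SS. \<alpha> S \<ge> 0 \<Longrightarrow> split_diversity SS \<alpha> A \<ge> 0"
  unfolding split_diversity_def by (intro sum_nonneg) auto

lemma split_diversity_empty:
  assumes "\<forall>S\<in>SS. is_split Y S"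
  shows "split_diversity SS \<alpha> {} = 0"
proof -
  have "{S\<in>SS. splits_set S {}} = {}" using assms not_splits_empty by blast
  then show ?thesis unfolding split_diversity_def by (simp only: sum.empty)
qed

lemma split_diversity_increment:
  assumes "finite SS" "U' \<subseteq> U"
  shows "split_diversity SS \<alpha> U = split_diversity SS \<alpha> U'
           + sum \<alpha> {S\<in>SS. splits_set S U \<and> \<not> splits_set S U'}"
proof -
  have "{S\<in>SS. splits_set S U} =
          {S\<in>SS. splits_set S U'} \<union> {S\<in>SS. splits_set S U \<and> \<not> splits_set S U'}"
    using splits_set_mono[OF assms(2)] by blast
  then show ?thesis unfolding split_diversity_def
    using assms(1) by (simp add: sum.union_disjoint disjoint_iff)
qed

text \<open>The splits lost when a member A is dropped from a family of at least three
  non-empty sets: they are pairwise disjoint for different A by not_splits_Un.\<close>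
lemma lost_splits_disjoint:
  assumes spl: "\<forall>S\<in>SS. is_split Y S"
    and fam: "\<A> \<subseteq> Pow Y - {{}}" "finite \<A>" "card \<A> \<ge> 3"
    and A: "A1 \<in> \<A>" "A2 \<in> \<A>" "A1 \<noteq> A2"
  shows "{S\<in>SS. splits_set S (\<Union>\<A>) \<and> \<not> splits_set S (\<Union>(\<A> - {A1}))}
       \<inter> {S\<in>SS. splits_set S (\<Union>\<A>) \<and> \<not> splits_set S (\<Union>(\<A> - {A2}))} = {}"
proof -
  have "card (\<A> - {A1, A2}) = card \<A> - 2"
    using A fam(2) by (simp add: card_Diff_subset)
  then have "card (\<A> - {A1, A2}) \<noteq> 0" using fam(3) by simp
  then have "\<A> - {A1, A2} \<noteq> {}" by (metis card.empty)
  then obtain A3 where A3: "A3 \<in> \<A>" "A3 \<noteq> A1" "A3 \<noteq> A2" by blast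
  then have "A3 \<subseteq> \<Union>(\<A> - {A1}) \<inter> \<Union>(\<A> - {A2}) \<inter> Y" "A3 \<noteq> {}"
    using fam(1) by auto
  then have common: "\<Union>(\<A> - {A1}) \<inter> \<Union>(\<A> - {A2}) \<inter> Y \<noteq> {}" by blast
  have union: "\<Union>(\<A> - {A1}) \<union> \<Union>(\<A> - {A2}) = \<Union>\<A>" using A by auto
  show ?thesis
    using not_splits_Un[OF _ _ _ common] spl unfolding union by blast
qed

text \<open>Leave-one-out inequality: summing the increments of all n members, each
  separating split of \<Union>\<A> is counted at most once, so the total increment is at
  most delta (\<Union>\<A>), while it equals n * delta (\<Union>\<A>) minus the leave-one-out sum.\<close>
lemma split_diversity_leave_one_out:
  assumes fin: "finite SS" and spl: "\<forall>S\<in>SS. is_split Y S" and nonneg: "\<forall>S\<in>SS. \<alpha> S \<ge> 0"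
    and fam: "\<A> \<subseteq> Pow Y - {{}}" "finite \<A>" "card \<A> \<ge> 3"
  shows "(real (card \<A>) - 1) * split_diversity SS \<alpha> (\<Union>\<A>)
           \<le> (\<Sum>A\<in>\<A>. split_diversity SS \<alpha> (\<Union>(\<A> - {A})))"
proof -
  let ?\<delta> = "split_diversity SS \<alpha>"
  define lost where "lost A = {S\<in>SS. splits_set S (\<Union>\<A>) \<and> \<not> splits_set S (\<Union>(\<A> - {A}))}" for A
  have increment: "?\<delta> (\<Union>(\<A> - {A})) = ?\<delta> (\<Union>\<A>) - sum \<alpha> (lost A)" for A
  proof -
    have "\<Union>(\<A> - {A}) \<subseteq> \<Union>\<A>" by blast
    from split_diversity_increment[OF fin this] show ?thesis unfolding lost_def by simp
  qed
  have "(\<Sum>A\<in>\<A>. sum \<alpha> (lost A)) = sum \<alpha> (\<Union>A\<in>\<A>. lost A)"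
    using lost_splits_disjoint[OF spl fam] fin fam(2)
    by (intro sum.UNION_disjoint[symmetric]) (auto simp: lost_def)
  also have "\<dots> \<le> ?\<delta> (\<Union>\<A>)"
    unfolding split_diversity_def using fin nonneg by (intro sum_mono2) (auto simp: lost_def)
  finally have "(\<Sum>A\<in>\<A>. sum \<alpha> (lost A)) \<le> ?\<delta> (\<Union>\<A>)" .
  moreover have "(\<Sum>A\<in>\<A>. ?\<delta> (\<Union>(\<A> - {A})))
                   = real (card \<A>) * ?\<delta> (\<Union>\<A>) - (\<Sum>A\<in>\<A>. sum \<alpha> (lost A))"
    unfolding increment by (simp add: sum_subtractf)
  ultimately show ?thesis by (simp add: algebra_simps)
qed

lemma pairwise_imp_collective:
  fixes \<delta> f :: "'a set \<Rightarrow> real"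
  assumes \<delta>_empty: "\<delta> {} = 0"
    and leave_one_out: "\<And>\<B>. \<B> \<subseteq> Pow Y - {{}} \<Longrightarrow> finite \<B> \<Longrightarrow> card \<B> \<ge> 3
                          \<Longrightarrow> (real (card \<B>) - 1) * \<delta> (\<Union>\<B>) \<le> (\<Sum>B\<in>\<B>. \<delta> (\<Union>(\<B> - {B})))"
    and f_empty: "f {} = 0"
    and pairwise: "\<forall>A\<in>Pow Y. \<forall>B\<in>Pow Y. f A + f B \<ge> \<delta> (A \<union> B)"
    and fam: "\<A> \<subseteq> Pow Y - {{}}" "finite \<A>"
  shows "\<delta> (\<Union>\<A>) \<le> sum f \<A>"
  using fam
proof (induction "card \<A>" arbitrary: \<A> rule: less_induct)
  case less
  let ?n = "card \<A>"
  consider "?n = 0" | "?n = 1" | "?n = 2" | "?n \<ge> 3" by linarith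
  then show ?case
  proof cases
    case 1
    then show ?thesis using less.prems \<delta>_empty by simp
  next
    case 2
    then obtain A where A: "\<A> = {A}" by (meson card_1_singletonE)
    then have "A \<in> Pow Y" using less.prems by auto
    then have "\<delta> (A \<union> {}) \<le> f A + f {}" using pairwise by blast
    then show ?thesis using A f_empty by simp
  next
    case 3
    then obtain A B where AB: "\<A> = {A, B}" "A \<noteq> B" by (meson card_2_iff)
    then have "A \<in> Pow Y" "B \<in> Pow Y" using less.prems by auto
    then have "\<delta> (A \<union> B) \<le> f A + f B" using pairwise by blast
    then show ?thesis using AB by simp
  next
    case 4
    have IH: "\<delta> (\<Union>(\<A> - {A})) \<le> sum f (\<A> - {A})" if "A \<in> \<A>" for A
      using less.hyps[of "\<A> - {A}"] less.prems that 4 by auto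
    have "(real ?n - 1) * \<delta> (\<Union>\<A>) \<le> (\<Sum>A\<in>\<A>. \<delta> (\<Union>(\<A> - {A})))"
      using leave_one_out less.prems 4 by blast
    also have "\<dots> \<le> (\<Sum>A\<in>\<A>. sum f \<A> - f A)"
      using IH less.prems(2) by (intro sum_mono) (simp add: sum_diff1)
    also have "\<dots> = (real ?n - 1) * sum f \<A>"
      by (simp add: sum_subtractf algebra_simps)
    finally show ?thesis using 4 by simp
  qed
qed

text \<open>For a non-negative delta the collective inequalities for one- and two-element
  families give the pairwise ones (for A = B, f A \<ge> delta A \<ge> 0 is needed).\<close>
lemma P_delta_subset_P2_delta:
  assumes nonneg: "\<And>A. \<delta> A \<ge> 0"
  shows "P_delta Y \<delta> \<subseteq> P2_delta Y \<delta>"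
proof
  fix f assume "f \<in> P_delta Y \<delta>"
  then have f: "f \<in> Pow Y \<rightarrow>\<^sub>E UNIV" "f {} = 0" "\<And>\<A>. \<A> \<subseteq> Pow Y \<Longrightarrow> sum f \<A> \<ge> \<delta> (\<Union>\<A>)"
    unfolding P_delta_def by auto
  have "f A + f B \<ge> \<delta> (A \<union> B)" if "A \<in> Pow Y" "B \<in> Pow Y" for A B
  proof (cases "A = B")
    case True
    then show ?thesis using f(3)[of "{A}"] nonneg[of A] that by simp
  next
    case False
    then show ?thesis using f(3)[of "{A, B}"] that by simp
  qed
  then show "f \<in> P2_delta Y \<delta>" using f(1,2) unfolding P2_delta_def by auto
qed

text \<open>Conversely the pairwise inequalities suffice under the hypotheses of
  pairwise_imp_collective; empty members of a family contribute nothing.\<close>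
lemma P2_delta_subset_P_delta:
  assumes "finite Y" and "\<delta> {} = 0"
    and leave_one_out: "\<And>\<B>. \<B> \<subseteq> Pow Y - {{}} \<Longrightarrow> finite \<B> \<Longrightarrow> card \<B> \<ge> 3
                          \<Longrightarrow> (real (card \<B>) - 1) * \<delta> (\<Union>\<B>) \<le> (\<Sum>B\<in>\<B>. \<delta> (\<Union>(\<B> - {B})))"
  shows "P2_delta Y \<delta> \<subseteq> P_delta Y \<delta>"
proof
  fix f assume "f \<in> P2_delta Y \<delta>"
  then have f: "f \<in> Pow Y \<rightarrow>\<^sub>E UNIV" "f {} = 0" "\<forall>A\<in>Pow Y. \<forall>B\<in>Pow Y. f A + f B \<ge> \<delta> (A \<union> B)"
    unfolding P2_delta_def by auto
  have "\<delta> (\<Union>\<A>) \<le> sum f \<A>" if "\<A> \<subseteq> Pow Y" for \<A>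
  proof -
    have fin: "finite \<A>" using that \<open>finite Y\<close> by (meson finite_Pow_iff finite_subset)
    have "\<delta> (\<Union>(\<A> - {{}})) \<le> sum f (\<A> - {{}})"
      using pairwise_imp_collective[OF assms(2) leave_one_out f(2,3), of "\<A> - {{}}"] that fin
      by auto
    moreover have "\<Union>(\<A> - {{}}) = \<Union>\<A>" by auto
    moreover have "sum f (\<A> - {{}}) = sum f \<A>" using fin f(2) by (simp add: sum_diff1)
    ultimately show ?thesis by simp
  qed
  then show "f \<in> P_delta Y \<delta>" using f(1,2) unfolding P_delta_def by auto
qed

theorem mainTheorem17:
  fixes Y :: "'a set" and SS :: "'a set set set" and \<alpha> :: "'a set set \<Rightarrow> real"
  assumes "finite Y"
    and "\<forall>S\<in>SS. is_split Y S"
    and "\<forall>S\<in>SS. \<alpha> S > 0"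
  shows "P_delta Y (split_diversity SS \<alpha>) = P2_delta Y (split_diversity SS \<alpha>)
    \<and> minimal_elements Y (P_delta Y (split_diversity SS \<alpha>))
      = minimal_elements Y (P2_delta Y (split_diversity SS \<alpha>))"
proof -
  let ?\<delta> = "split_diversity SS \<alpha>"
  have nonneg: "\<forall>S\<in>SS. \<alpha> S \<ge> 0" using assms(3) by (simp add: less_imp_le)
  have "P_delta Y ?\<delta> \<subseteq> P2_delta Y ?\<delta>"
    using P_delta_subset_P2_delta split_diversity_nonneg[OF nonneg] by blast
  moreover have "P2_delta Y ?\<delta> \<subseteq> P_delta Y ?\<delta>"
    by (rule P2_delta_subset_P_delta[OF assms(1) split_diversity_empty[OF assms(2)]
          split_diversity_leave_one_out[OF finite_split_system[OF assms(1,2)] assms(2) nonneg]])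
  ultimately show ?thesis by simp
qed

end
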